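(* Let $G$ be a graph and let $S\subseteq V(G)$ be a twin cover of $G$ with $|S|=k$. Let $C_i$ and $C_j$ be connected components of $G-S$, each with more than $k$ vertices, such that $|C_i|\equiv|C_j|\pmod 2$ and $N(u)\cap S=N(w)\cap S$ for $u\in C_i$, $w\in C_j$. If $\sigma$ is a layout of $G$ and $q$ is an integer such that every vertex $v\in C_i\cup C_j$ satisfies $|\{s\in S: s<_\sigma v\}|+1=q$, then $\gamma^+(C_i,\sigma)=\gamma^+(C_j,\sigma)$.
   Context: All graphs are finite, simple and undirected. For a layout (linear ordering) $\sigma$ of $V(G)$ and $v\in V(G)$, $N_L(v,\sigma)$ and $N_R(v,\sigma)$ are the sets of neighbours of $v$ preceding and following $v$, and $\mathcal{I}(v,\sigma)=\big||N_L(v,\sigma)|-|N_R(v,\sigma)|\big|$. A twin cover of $G$ is a set $S\subseteq V(G)$ such that every connected component $X$ of $G-S$ is a set of true twins in $G$ ($N[u]=N[v]$ for all $u,v\in X$). Let $\gamma(\ell)=\ell^2/2$ if $\ell$ is even and $\gamma(\ell)=(\ell^2-1)/2$ if $\ell$ is odd. For a component $C$ of $G-S$, $\gamma^+(C,\sigma)=\sum_{v\in C}\mathcal{I}(v,\sigma)-\gamma(|C|)$ (excess imbalance). The number $|\{s\in S:s<_\sigma v\}|+1$ is the location of $v$ in $\sigma$; the hypothesis says $C_i$ and $C_j$ are placed at the same location. *)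

theory Defs
  imports Main
begin

definition graph :: "'a set \<Rightarrow> ('a \<Rightarrow> 'a \<Rightarrow> bool) \<Rightarrow> bool" where
  "graph V E \<longleftrightarrow> finite V \<and> (\<forall>u v. E u v \<longrightarrow> u \<in> V \<and> v \<in> V)
     \<and> (\<forall>u v. E u v \<longrightarrow> E v u) \<and> (\<forall>v. \<not> E v v)"

definition nbhd :: "'a set \<Rightarrow> ('a \<Rightarrow> 'a \<Rightarrow> bool) \<Rightarrow> 'a \<Rightarrow> 'a set" where
  "nbhd V E v = {u \<in> V. E v u}"

definition closed_nbhd :: "'a set \<Rightarrow> ('a \<Rightarrow> 'a \<Rightarrow> bool) \<Rightarrow> 'a \<Rightarrow> 'a set" where
  "closed_nbhd V E v = insert v (nbhd V E v)"

definition reach_in :: "'a set \<Rightarrow> ('a \<Rightarrow> 'a \<Rightarrow> bool) \<Rightarrow> 'a \<Rightarrow> 'a \<Rightarrow> bool" where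
  "reach_in W E = (\<lambda>x y. x \<in> W \<and> y \<in> W \<and> E x y)\<^sup>*\<^sup>*"

definition component_of :: "'a set \<Rightarrow> ('a \<Rightarrow> 'a \<Rightarrow> bool) \<Rightarrow> 'a set \<Rightarrow> bool" where
  "component_of W E X \<longleftrightarrow> (\<exists>x\<in>W. X = {y \<in> W. reach_in W E x y})"

definition component_minus :: "'a set \<Rightarrow> ('a \<Rightarrow> 'a \<Rightarrow> bool) \<Rightarrow> 'a set \<Rightarrow> 'a set \<Rightarrow> bool" where
  "component_minus V E S X \<longleftrightarrow> component_of (V - S) E X"

definition true_twins :: "'a set \<Rightarrow> ('a \<Rightarrow> 'a \<Rightarrow> bool) \<Rightarrow> 'a set \<Rightarrow> bool" where
  "true_twins V E X \<longleftrightarrow> (\<forall>u\<in>X. \<forall>v\<in>X. closed_nbhd V E u = closed_nbhd V E v)"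

definition twin_cover :: "'a set \<Rightarrow> ('a \<Rightarrow> 'a \<Rightarrow> bool) \<Rightarrow> 'a set \<Rightarrow> bool" where
  "twin_cover V E S \<longleftrightarrow> S \<subseteq> V \<and> (\<forall>X. component_minus V E S X \<longrightarrow> true_twins V E X)"

definition layout :: "'a set \<Rightarrow> 'a list \<Rightarrow> bool" where
  "layout V \<sigma> \<longleftrightarrow> distinct \<sigma> \<and> set \<sigma> = V"

definition before :: "'a list \<Rightarrow> 'a \<Rightarrow> 'a \<Rightarrow> bool" where
  "before \<sigma> u v \<longleftrightarrow> (\<exists>i j. i < j \<and> j < length \<sigma> \<and> \<sigma> ! i = u \<and> \<sigma> ! j = v)"

definition NL :: "'a set \<Rightarrow> ('a \<Rightarrow> 'a \<Rightarrow> bool) \<Rightarrow> 'a \<Rightarrow> 'a list \<Rightarrow> 'a set" where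
  "NL V E v \<sigma> = {u \<in> nbhd V E v. before \<sigma> u v}"

definition NR :: "'a set \<Rightarrow> ('a \<Rightarrow> 'a \<Rightarrow> bool) \<Rightarrow> 'a \<Rightarrow> 'a list \<Rightarrow> 'a set" where
  "NR V E v \<sigma> = {u \<in> nbhd V E v. before \<sigma> v u}"

definition imbalance :: "'a set \<Rightarrow> ('a \<Rightarrow> 'a \<Rightarrow> bool) \<Rightarrow> 'a \<Rightarrow> 'a list \<Rightarrow> int" where
  "imbalance V E v \<sigma> = \<bar>int (card (NL V E v \<sigma>)) - int (card (NR V E v \<sigma>))\<bar>"

definition gamma :: "nat \<Rightarrow> int" where
  "gamma l = (if even l then int (l^2) div 2 else (int (l^2) - 1) div 2)"

definition excess_imbalance :: "'a set \<Rightarrow> ('a \<Rightarrow> 'a \<Rightarrow> bool) \<Rightarrow> 'a set \<Rightarrow> 'a list \<Rightarrow> int" where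
  "excess_imbalance V E C \<sigma> = (\<Sum>v\<in>C. imbalance V E v \<sigma>) - gamma (card C)"

definition location :: "'a set \<Rightarrow> 'a list \<Rightarrow> 'a \<Rightarrow> nat" where
  "location S \<sigma> v = card {s \<in> S. before \<sigma> s v} + 1"

end

theory Submission
  imports Defs
begin

text \<open>All vertices of a component C of G - S are true twins, so they share their set T of
  S-neighbours; placed at one location they also share the set P of S-vertices to their left.
  The vertex of C with exactly i predecessors in C thus has i + |T \<inter> P| left and
  |C| - 1 - i + |T - P| right neighbours, so the imbalances of C sum to
  \<Sum>i<|C|. |2i - (|C| - 1) + d| with d = 2|T \<inter> P| - |T|. Enlarging |C| by two adds exactly
  2|C| + 2 to this sum as long as |d| \<le> |C|, which is also what \<gamma> gains. As
  |d| \<le> |T| \<le> k < |C_i|, |C_j| and the two sizes have equal parity, the excesses coincide.\<close>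

definition offset_abs_sum :: "nat \<Rightarrow> int \<Rightarrow> int" where
  "offset_abs_sum m d = (\<Sum>i<m. \<bar>2 * int i - (int m - 1) + d\<bar>)"

lemma offset_abs_sum_Suc_Suc:
  assumes "\<bar>d\<bar> \<le> int m"
  shows "offset_abs_sum (Suc (Suc m)) d = offset_abs_sum m d + 2 * int m + 2"
proof -
  have "offset_abs_sum (Suc (Suc m)) d
      = \<bar>d - (int m + 1)\<bar> + (\<Sum>i<Suc m. \<bar>2 * int (Suc i) - (int m + 1) + d\<bar>)"
    unfolding offset_abs_sum_def by (subst sum.lessThan_Suc_shift) (simp add: algebra_simps)
  also have "\<dots> = \<bar>d - (int m + 1)\<bar> + \<bar>d + (int m + 1)\<bar> + (\<Sum>i<m. \<bar>2 * int (Suc i) - (int m + 1) + d\<bar>)"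
    by (simp add: algebra_simps)
  also have "(\<Sum>i<m. \<bar>2 * int (Suc i) - (int m + 1) + d\<bar>) = offset_abs_sum m d"
    unfolding offset_abs_sum_def by (simp add: algebra_simps)
  finally show ?thesis using assms by simp
qed

lemma gamma_Suc_Suc: "gamma (Suc (Suc m)) = gamma m + 2 * int m + 2"
  by (auto simp: gamma_def power2_eq_square algebra_simps)

lemma offset_abs_sum_minus_gamma_add_even:
  assumes "\<bar>d\<bar> \<le> int m"
  shows "offset_abs_sum (m + 2 * j) d - gamma (m + 2 * j) = offset_abs_sum m d - gamma m"
proof (induction j)
  case (Suc j)
  have "\<bar>d\<bar> \<le> int (m + 2 * j)" using assms by simp
  then have "offset_abs_sum (Suc (Suc (m + 2 * j))) d - gamma (Suc (Suc (m + 2 * j)))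
      = offset_abs_sum (m + 2 * j) d - gamma (m + 2 * j)"
    by (simp add: offset_abs_sum_Suc_Suc gamma_Suc_Suc)
  moreover have "m + 2 * Suc j = Suc (Suc (m + 2 * j))" by simp
  ultimately show ?case using Suc.IH by simp
qed simp

lemma offset_abs_sum_minus_gamma_eq:
  assumes "\<bar>d\<bar> \<le> int m" "\<bar>d\<bar> \<le> int n" "m mod 2 = n mod 2"
  shows "offset_abs_sum m d - gamma m = offset_abs_sum n d - gamma n"
proof -
  have step: "offset_abs_sum m' d - gamma m' = offset_abs_sum n' d - gamma n'"
    if d: "\<bar>d\<bar> \<le> int n'" and le: "n' \<le> m'" and "m' mod 2 = n' mod 2" for m' n'
  proof -
    have "2 dvd m' - n'" using mod_eq_dvd_iff_nat[OF le] that(3) by simp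
    then obtain j where "m' = n' + 2 * j" using le by (metis dvdE le_add_diff_inverse)
    then show ?thesis using offset_abs_sum_minus_gamma_add_even[OF d] by simp
  qed
  show ?thesis
  proof (cases "n \<le> m")
    case True
    show ?thesis using step[OF assms(2) True assms(3)] .
  next
    case False
    then show ?thesis using step[OF assms(1) _ assms(3)[symmetric]] by simp
  qed
qed

lemma abs_two_card_Int_minus_card_le:
  "finite T \<Longrightarrow> \<bar>2 * int (card (T \<inter> P)) - int (card T)\<bar> \<le> int (card T)"
  using card_mono[of T "T \<inter> P"] by auto

lemma irreflp_before: "distinct \<sigma> \<Longrightarrow> irreflp (before \<sigma>)"
  by (auto simp: irreflp_def before_def nth_eq_iff_index_eq)

lemma transp_before: "distinct \<sigma> \<Longrightarrow> transp (before \<sigma>)"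
  unfolding transp_def before_def by (metis nth_eq_iff_index_eq order.strict_trans)

lemma totalp_on_before: "totalp_on (set \<sigma>) (before \<sigma>)"
  unfolding totalp_on_def before_def by (metis in_set_conv_nth linorder_neqE_nat)

lemma bij_betw_rank:
  assumes "finite C" "transp lt" "irreflp lt" "totalp_on C lt"
  shows "bij_betw (\<lambda>v. card {u\<in>C. lt u v}) C {..<card C}"
proof -
  let ?rank = "\<lambda>v. card {u\<in>C. lt u v}"
  have rank_less: "?rank u < ?rank v" if "u \<in> C" "lt u v" for u v
  proof (rule psubset_card_mono)
    have "{w\<in>C. lt w u} \<subseteq> {w\<in>C. lt w v}"
      using that(2) assms(2) by (auto dest: transpD)
    moreover have "u \<in> {w\<in>C. lt w v} - {w\<in>C. lt w u}"
      using that irreflpD[OF assms(3), of u] by blast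
    ultimately show "{w\<in>C. lt w u} \<subset> {w\<in>C. lt w v}" by blast
  qed (use assms(1) in simp)
  have inj: "inj_on ?rank C"
  proof (rule inj_onI, rule ccontr)
    fix u v assume "u \<in> C" "v \<in> C" "?rank u = ?rank v" "u \<noteq> v"
    then have "lt u v \<or> lt v u" using totalp_onD[OF assms(4)] by blast
    then show False using rank_less \<open>u \<in> C\<close> \<open>v \<in> C\<close> \<open>?rank u = ?rank v\<close> by fastforce
  qed
  have "?rank v < card C" if "v \<in> C" for v
  proof (rule psubset_card_mono)
    show "{u\<in>C. lt u v} \<subset> C" using that irreflpD[OF assms(3), of v] by blast
  qed (use assms(1) in simp)
  then have "?rank ` C \<subseteq> {..<card C}" by auto
  moreover have "card (?rank ` C) = card {..<card C}"
    using card_image[OF inj] by simp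
  ultimately show ?thesis
    using inj card_subset_eq unfolding bij_betw_def by blast
qed

lemma predecessors_eq_if_location_eq:
  assumes "layout V \<sigma>" "finite S" "v \<in> V" "w \<in> V"
    and "location S \<sigma> v = location S \<sigma> w"
  shows "{s\<in>S. before \<sigma> s v} = {s\<in>S. before \<sigma> s w}"
proof -
  have \<sigma>: "distinct \<sigma>" "set \<sigma> = V" using assms(1) unfolding layout_def by auto
  have card: "card {s\<in>S. before \<sigma> s v} = card {s\<in>S. before \<sigma> s w}"
    using assms(5) unfolding location_def by simp
  have subset: "{s\<in>S. before \<sigma> s x} \<subseteq> {s\<in>S. before \<sigma> s y}" if "before \<sigma> x y" for x y
    using that transp_before[OF \<sigma>(1)] by (auto dest: transpD)
  consider "v = w" | "before \<sigma> v w" | "before \<sigma> w v"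
    using totalp_on_before \<sigma>(2) assms(3,4) by (metis totalp_onD)
  then show ?thesis
  proof cases
    case 2
    then show ?thesis using subset assms(2) card by (intro card_subset_eq) auto
  next
    case 3
    then show ?thesis using subset assms(2) card by (intro card_subset_eq[symmetric]) auto
  qed simp
qed

lemma component_minus_subset: "component_minus V E S C \<Longrightarrow> C \<subseteq> V - S"
  unfolding component_minus_def component_of_def by blast

lemma component_minus_closed:
  assumes "component_minus V E S C" "v \<in> C" "u \<in> V - S" "E v u"
  shows "u \<in> C"
proof -
  obtain x where C: "C = {y \<in> V - S. reach_in (V - S) E x y}"
    using assms(1) unfolding component_minus_def component_of_def by blast
  then have "reach_in (V - S) E x v" using assms(2) by blast
  then have "reach_in (V - S) E x u"
    unfolding reach_in_def using assms C by (auto intro: rtranclp.rtrancl_into_rtrancl)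
  then show ?thesis using C assms(3) by blast
qed

lemma nbhd_in_twin_component:
  assumes "graph V E" "twin_cover V E S" "component_minus V E S C" "v \<in> C"
  shows "nbhd V E v = (C - {v}) \<union> (nbhd V E v \<inter> S)"
proof
  show "nbhd V E v \<subseteq> (C - {v}) \<union> (nbhd V E v \<inter> S)"
    using assms(1,3,4) component_minus_closed[OF assms(3,4)]
    unfolding graph_def nbhd_def by blast
  have "closed_nbhd V E u = closed_nbhd V E v" if "u \<in> C" for u
    using assms(2-4) that unfolding twin_cover_def true_twins_def by blast
  then show "(C - {v}) \<union> (nbhd V E v \<inter> S) \<subseteq> nbhd V E v"
    unfolding closed_nbhd_def by blast
qed

lemma nbhd_Int_eq_in_twin_component:
  assumes "twin_cover V E S" "component_minus V E S C" "u \<in> C" "v \<in> C"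
  shows "nbhd V E u \<inter> S = nbhd V E v \<inter> S"
proof -
  have "insert u (nbhd V E u) = insert v (nbhd V E v)"
    using assms unfolding twin_cover_def true_twins_def closed_nbhd_def by blast
  moreover have "u \<notin> S" "v \<notin> S"
    using component_minus_subset[OF assms(2)] assms(3,4) by auto
  ultimately show ?thesis by (metis Int_insert_left)
qed

lemma imbalance_eq_card_NL:
  assumes "graph V E" "layout V \<sigma>" "v \<in> V"
  shows "imbalance V E v \<sigma> = \<bar>2 * int (card (NL V E v \<sigma>)) - int (card (nbhd V E v))\<bar>"
proof -
  have \<sigma>: "distinct \<sigma>" "set \<sigma> = V" using assms(2) unfolding layout_def by auto
  have "nbhd V E v = NL V E v \<sigma> \<union> NR V E v \<sigma>"
    using assms(1,3) totalp_on_before[of \<sigma>] \<sigma>(2)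
    unfolding NL_def NR_def nbhd_def graph_def by (auto dest: totalp_onD)
  moreover have "NL V E v \<sigma> \<inter> NR V E v \<sigma> = {}"
    using irreflp_before[OF \<sigma>(1)] transp_before[OF \<sigma>(1)]
    unfolding NL_def NR_def by (auto dest: transpD irreflpD)
  moreover have "finite (nbhd V E v)"
    using assms(1) unfolding graph_def nbhd_def by auto
  ultimately have "card (nbhd V E v) = card (NL V E v \<sigma>) + card (NR V E v \<sigma>)"
    by (metis card_Un_disjoint finite_Un)
  then show ?thesis unfolding imbalance_def by simp
qed

lemma imbalance_in_twin_class:
  assumes "graph V E" "layout V \<sigma>" "C \<subseteq> V" "T \<subseteq> V" "C \<inter> T = {}" "v \<in> C"
    and nbhd: "nbhd V E v = (C - {v}) \<union> T"
  shows "imbalance V E v \<sigma> = \<bar>2 * int (card {u\<in>C. before \<sigma> u v}) - (int (card C) - 1)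
    + (2 * int (card {t\<in>T. before \<sigma> t v}) - int (card T))\<bar>"
proof -
  have fin: "finite C" "finite T"
    using assms(1,3,4) unfolding graph_def by (auto intro: finite_subset)
  have "\<not> before \<sigma> v v"
    using assms(2) irreflp_before unfolding layout_def by (metis irreflpD)
  then have "NL V E v \<sigma> = {u\<in>C. before \<sigma> u v} \<union> {t\<in>T. before \<sigma> t v}"
    unfolding NL_def nbhd by auto
  then have "card (NL V E v \<sigma>) = card {u\<in>C. before \<sigma> u v} + card {t\<in>T. before \<sigma> t v}"
    using fin assms(5) by (simp add: card_Un_disjoint disjoint_iff)
  moreover have "card (nbhd V E v) = card C - 1 + card T"
    unfolding nbhd using fin assms(5,6) by (simp add: card_Un_disjoint card_Diff_singleton disjoint_iff)
  moreover have "card C \<ge> 1"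
    using fin assms(6) by (metis One_nat_def Suc_leI card_gt_0_iff empty_iff)
  ultimately show ?thesis
    using imbalance_eq_card_NL[OF assms(1,2)] assms(3,6) by (auto simp: of_nat_diff)
qed

lemma sum_imbalance_twin_component:
  assumes "graph V E" "twin_cover V E S" "component_minus V E S C" "layout V \<sigma>"
    and T: "\<forall>v\<in>C. nbhd V E v \<inter> S = T" and P: "\<forall>v\<in>C. {s\<in>S. before \<sigma> s v} = P"
  shows "(\<Sum>v\<in>C. imbalance V E v \<sigma>)
    = offset_abs_sum (card C) (2 * int (card (T \<inter> P)) - int (card T))"
proof -
  define d where "d = 2 * int (card (T \<inter> P)) - int (card T)"
  define rank where "rank v = card {u\<in>C. before \<sigma> u v}" for v
  have \<sigma>: "distinct \<sigma>" "set \<sigma> = V" using assms(4) unfolding layout_def by auto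
  have CV: "C \<subseteq> V - S" using component_minus_subset[OF assms(3)] .
  have SV: "S \<subseteq> V" using assms(2) unfolding twin_cover_def by blast
  have imb: "imbalance V E v \<sigma> = \<bar>2 * int (rank v) - (int (card C) - 1) + d\<bar>" if "v \<in> C" for v
  proof -
    have "T \<subseteq> S" using T that by auto
    have "nbhd V E v = (C - {v}) \<union> T"
      using nbhd_in_twin_component[OF assms(1-3) that] T that by auto
    then have "imbalance V E v \<sigma> = \<bar>2 * int (rank v) - (int (card C) - 1)
        + (2 * int (card {t\<in>T. before \<sigma> t v}) - int (card T))\<bar>"
      unfolding rank_def using CV SV \<open>T \<subseteq> S\<close> that
      by (intro imbalance_in_twin_class[OF assms(1,4)]) auto
    moreover have "{t\<in>T. before \<sigma> t v} = T \<inter> P" using \<open>T \<subseteq> S\<close> P that by auto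
    ultimately show ?thesis unfolding d_def by simp
  qed
  have "finite C" using CV assms(1) unfolding graph_def by (auto intro: finite_subset)
  then have "bij_betw rank C {..<card C}"
    unfolding rank_def using CV \<sigma>
    by (intro bij_betw_rank transp_before irreflp_before totalp_on_subset[OF totalp_on_before]) auto
  then have "(\<Sum>v\<in>C. \<bar>2 * int (rank v) - (int (card C) - 1) + d\<bar>) = offset_abs_sum (card C) d"
    unfolding offset_abs_sum_def by (rule sum.reindex_bij_betw)
  then show ?thesis using imb d_def by simp
qed

theorem corollary3:
  fixes V :: "'a set" and E :: "'a \<Rightarrow> 'a \<Rightarrow> bool" and S Ci Cj :: "'a set"
    and k :: nat and \<sigma> :: "'a list" and q :: int
  assumes "graph V E"
    and "twin_cover V E S" and "card S = k"
    and "component_minus V E S Ci" and "component_minus V E S Cj"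
    and "card Ci > k" and "card Cj > k"
    and "card Ci mod 2 = card Cj mod 2"
    and "\<forall>u\<in>Ci. \<forall>w\<in>Cj. nbhd V E u \<inter> S = nbhd V E w \<inter> S"
    and "layout V \<sigma>"
    and "\<forall>v\<in>Ci \<union> Cj. int (location S \<sigma> v) = q"
  shows "excess_imbalance V E Ci \<sigma> = excess_imbalance V E Cj \<sigma>"
proof -
  obtain u where u: "u \<in> Ci" using assms(6) by (metis card.empty equals0I less_nat_zero_code)
  have "S \<subseteq> V" "finite V" using assms(1,2) unfolding graph_def twin_cover_def by auto
  then have "finite S" by (rule finite_subset)
  define T where "T = nbhd V E u \<inter> S"
  define P where "P = {s\<in>S. before \<sigma> s u}"
  define d where "d = 2 * int (card (T \<inter> P)) - int (card T)"
  have "T \<subseteq> S" unfolding T_def by blast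
  then have "finite T" "card T \<le> k"
    using finite_subset[OF _ \<open>finite S\<close>] card_mono[OF \<open>finite S\<close>] assms(3) by simp_all
  then have d_le: "\<bar>d\<bar> \<le> int k"
    using abs_two_card_Int_minus_card_le[OF \<open>finite T\<close>, of P] unfolding d_def by linarith
  have "\<forall>v\<in>Ci \<union> Cj. nbhd V E v \<inter> S = T"
    using nbhd_Int_eq_in_twin_component[OF assms(2,4) _ u] assms(9) u unfolding T_def by blast
  moreover have "\<forall>v\<in>Ci \<union> Cj. {s\<in>S. before \<sigma> s v} = P"
  proof
    fix v assume v: "v \<in> Ci \<union> Cj"
    then have "location S \<sigma> v = location S \<sigma> u" using assms(11) u by (metis UnCI of_nat_eq_iff)
    then show "{s\<in>S. before \<sigma> s v} = P"
      unfolding P_def using component_minus_subset[OF assms(4)] component_minus_subset[OF assms(5)] u v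
      by (intro predecessors_eq_if_location_eq[OF assms(10) \<open>finite S\<close>]) auto
  qed
  ultimately have "(\<Sum>v\<in>Ci. imbalance V E v \<sigma>) = offset_abs_sum (card Ci) d"
    and "(\<Sum>v\<in>Cj. imbalance V E v \<sigma>) = offset_abs_sum (card Cj) d"
    unfolding d_def by (simp_all add: sum_imbalance_twin_component[OF assms(1,2,4,10)]
      sum_imbalance_twin_component[OF assms(1,2,5,10)])
  then show ?thesis
    unfolding excess_imbalance_def
    using offset_abs_sum_minus_gamma_eq d_le assms(6-8) by simp
qed

end
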